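(* Let $n\ge 5$ and let $\sigma$ be a maximal simplex of $\Delta_n$ that covers all places. Then $N(v)\cap\sigma\neq\emptyset$ for every $v\in\sigma$.
   Context: $\mathbb{I}_n$ is the $n$-dimensional hypercube graph on vertex set $\{0,1\}^n$ (adjacent iff differing in exactly one coordinate), with Hamming distance $d(v,w)=\#\{i: v(i)\ne w(i)\}$, $v(i)$ the $i$-th coordinate. $\Delta_n=\mathcal{VR}(\mathbb{I}_n;3)$ is the simplicial complex whose simplices are the subsets $\sigma\subseteq\{0,1\}^n$ with $d(x,y)\le 3$ for all $x,y\in\sigma$. A simplex $\sigma$ covers all places if for each $i\in[n]=\{1,\dots,n\}$ there are $v,w\in\sigma$ with $v(i)=1$ and $w(i)=0$. $N(v)=\{v^i: i\in[n]\}$, where $v^i$ is $v$ with coordinate $i$ changed. *)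

theory Defs
  imports Main
begin

text \<open>Vertices of the hypercube I_n are functions nat => bool vanishing (False)
outside the coordinate set {1..n}; coordinate i of v is v i (True = 1).\<close>

definition cube :: "nat \<Rightarrow> (nat \<Rightarrow> bool) set" where
  "cube n = {v. \<forall>i. i \<notin> {1..n} \<longrightarrow> \<not> v i}"

definition hdist :: "nat \<Rightarrow> (nat \<Rightarrow> bool) \<Rightarrow> (nat \<Rightarrow> bool) \<Rightarrow> nat" where
  "hdist n v w = card {i \<in> {1..n}. v i \<noteq> w i}"

text \<open>Simplices of Delta_n = VR(I_n; 3): nonempty finite vertex sets of pairwise distance at most 3.\<close>
definition is_simplex :: "nat \<Rightarrow> (nat \<Rightarrow> bool) set \<Rightarrow> bool" where
  "is_simplex n \<sigma> \<longleftrightarrow> \<sigma> \<noteq> {} \<and> finite \<sigma> \<and> \<sigma> \<subseteq> cube n \<and>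
     (\<forall>x\<in>\<sigma>. \<forall>y\<in>\<sigma>. hdist n x y \<le> 3)"

definition maximal_simplex :: "nat \<Rightarrow> (nat \<Rightarrow> bool) set \<Rightarrow> bool" where
  "maximal_simplex n \<sigma> \<longleftrightarrow> is_simplex n \<sigma> \<and> (\<forall>\<tau>. is_simplex n \<tau> \<and> \<sigma> \<subseteq> \<tau> \<longrightarrow> \<tau> = \<sigma>)"

definition covers_all_places :: "nat \<Rightarrow> (nat \<Rightarrow> bool) set \<Rightarrow> bool" where
  "covers_all_places n \<sigma> \<longleftrightarrow> (\<forall>i\<in>{1..n}. \<exists>v\<in>\<sigma>. \<exists>w\<in>\<sigma>. v i \<and> \<not> w i)"

definition flip :: "(nat \<Rightarrow> bool) \<Rightarrow> nat \<Rightarrow> (nat \<Rightarrow> bool)" where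
  "flip v i = v(i := \<not> v i)"

definition nbhd :: "nat \<Rightarrow> (nat \<Rightarrow> bool) \<Rightarrow> (nat \<Rightarrow> bool) set" where
  "nbhd n v = (\<lambda>i. flip v i) ` {1..n}"

end

theory Submission
  imports Defs
begin

text \<open>Measure every vertex w of \<sigma> by the set D(w) of coordinates in which it differs from the
chosen vertex v. If v had no neighbour in \<sigma>, every D(w) with w \<noteq> v would have 2 or 3
elements, and the Hamming distance between two vertices of \<sigma> is the size of the symmetric
difference of their sets. Pairwise close 3-sets without a common element are forced to be the four
3-subsets of a 4-set; since \<sigma> covers at least five places, some D(w) leaves that 4-set, which is
impossible. So the 3-sets D(w) share a coordinate i, and flipping v at i yields a vertex within
distance 3 of all of \<sigma>, contradicting maximality.\<close>

lemma card_sym_diff: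
  assumes "finite A" "finite B"
  shows "card (sym_diff A B) + 2 * card (A \<inter> B) = card A + card B"
proof -
  have "card (sym_diff A B) = card (A - B) + card (B - A)"
    by (rule card_Un_disjoint) (use assms in auto)
  moreover have "card (A - B) = card A - card (A \<inter> B)" "card (B - A) = card B - card (A \<inter> B)"
    using assms by (simp_all add: card_Diff_subset_Int Int_commute)
  moreover have "card (A \<inter> B) \<le> card A" "card (A \<inter> B) \<le> card B"
    using assms by (auto intro: card_mono)
  ultimately show ?thesis by linarith
qed

lemma card_3_avoiding_one:
  fixes a b c :: 'a
  assumes "card A = 3" "a \<notin> A" "2 \<le> card ({a, b, c} \<inter> A)" "a \<noteq> b" "b \<noteq> c" "a \<noteq> c"
  shows "\<exists>x. A = {b, c, x} \<and> x \<notin> {a, b, c}"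
proof -
  have "{a, b, c} \<inter> A = {b, c}"
    by (rule card_seteq) (use assms in auto)
  then have bc: "{b, c} \<subseteq> A" by auto
  have "card (A - {b, c}) = 1"
    using assms bc by (simp add: card_Diff_subset card.infinite[of A])
  then obtain x where "A - {b, c} = {x}" by (meson card_1_singletonE)
  then show ?thesis using assms bc by auto
qed

lemma card_3_avoiding_triangle:
  fixes a b c :: 'a
  assumes "a \<noteq> b" "b \<noteq> c" "a \<noteq> c"
    and "card A = 3" "card B = 3" "card C = 3" "a \<notin> A" "b \<notin> B" "c \<notin> C"
    and "2 \<le> card ({a, b, c} \<inter> A)" "2 \<le> card ({a, b, c} \<inter> B)" "2 \<le> card ({a, b, c} \<inter> C)"
    and AB: "2 \<le> card (A \<inter> B)" and AC: "2 \<le> card (A \<inter> C)"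
  shows "\<exists>x. A = {b, c, x} \<and> B = {a, c, x} \<and> C = {a, b, x} \<and> x \<notin> {a, b, c}"
proof -
  obtain x where x: "A = {b, c, x}" "x \<notin> {a, b, c}"
    using card_3_avoiding_one[of A a b c] assms by blast
  obtain y where y: "B = {a, c, y}" "y \<notin> {a, b, c}"
    using card_3_avoiding_one[of B b a c] assms by (auto simp: insert_commute)
  obtain z where z: "C = {a, b, z}" "z \<notin> {a, b, c}"
    using card_3_avoiding_one[of C c a b] assms by (auto simp: insert_commute)
  have "x = y"
  proof (rule ccontr)
    assume "x \<noteq> y"
    then have "A \<inter> B = {c}" using x y assms by auto
    then show False using AB by simp
  qed
  moreover have "x = z"
  proof (rule ccontr)
    assume "x \<noteq> z"
    then have "A \<inter> C = {b}" using x z assms by auto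
    then show False using AC by simp
  qed
  ultimately show ?thesis using x y z by auto
qed

lemma Diff_singleton_subset_if_card_Int:
  assumes "finite A" "j \<in> A" "j \<notin> X" "card A - 1 \<le> card (A \<inter> X)"
  shows "A - {j} \<subseteq> X"
proof -
  have "A \<inter> X = A - {j}"
    by (rule card_seteq) (use assms in auto)
  then show ?thesis by auto
qed

lemma card_sym_diff_singleton_le_3:
  assumes "finite D" "card D \<le> 3" "card D = 3 \<Longrightarrow> i \<in> D"
  shows "card (sym_diff {i} D) \<le> 3"
proof (cases "i \<in> D")
  case True
  then have "sym_diff {i} D = D - {i}" by auto
  then show ?thesis using assms(2) card_Diff1_le[of D i] by simp
next
  case False
  then have "sym_diff {i} D = insert i D" by auto
  moreover have "card D \<noteq> 3" using assms(3) False by blast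
  ultimately show ?thesis using assms(1,2) False by (simp add: card_insert_if)
qed

lemma common_point_of_close_sets:
  fixes \<A> :: "'a set set"
  assumes sizes: "\<And>A. A \<in> \<A> \<Longrightarrow> finite A \<and> 2 \<le> card A \<and> card A \<le> 3"
    and close: "\<And>A B. A \<in> \<A> \<Longrightarrow> B \<in> \<A> \<Longrightarrow> card (sym_diff A B) \<le> 3"
    and big: "5 \<le> card (\<Union>\<A>)"
  shows "\<exists>i\<in>\<Union>\<A>. \<forall>A\<in>\<A>. card A = 3 \<longrightarrow> i \<in> A"
proof (rule ccontr)
  assume "\<not> ?thesis"
  then have avoid: "\<And>i. i \<in> \<Union>\<A> \<Longrightarrow> \<exists>A\<in>\<A>. card A = 3 \<and> i \<notin> A" by blast
  have meet: "card A + card B \<le> 3 + 2 * card (A \<inter> B)" if "A \<in> \<A>" "B \<in> \<A>" for A B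
    using card_sym_diff[of A B] close[OF that] sizes that by fastforce
  have "\<Union>\<A> \<noteq> {}" by (metis big card.empty not_numeral_le_zero)
  then obtain i0 where "i0 \<in> \<Union>\<A>" by blast
  then obtain T where T: "T \<in> \<A>" "card T = 3" using avoid by blast
  then obtain a b c where abc: "T = {a, b, c}" "a \<noteq> b" "b \<noteq> c" "a \<noteq> c"
    by (meson card_3_iff)
  have "a \<in> \<Union>\<A>" "b \<in> \<Union>\<A>" "c \<in> \<Union>\<A>" using T(1) abc(1) by auto
  then obtain A B C where ABC: "A \<in> \<A>" "B \<in> \<A>" "C \<in> \<A>" "card A = 3" "card B = 3" "card C = 3"
    "a \<notin> A" "b \<notin> B" "c \<notin> C"
    using avoid by meson
  have "2 \<le> card ({a, b, c} \<inter> X)" if "X \<in> \<A>" "card X = 3" for X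
    using meet[OF T(1) that(1)] T(2) that(2) abc(1) by simp
  moreover have "2 \<le> card (A \<inter> X)" if "X \<in> \<A>" "card X = 3" for X
    using meet[OF ABC(1) that(1)] ABC(4) that(2) by simp
  ultimately obtain x where x: "A = {b, c, x}" "B = {a, c, x}" "C = {a, b, x}" "x \<notin> {a, b, c}"
    using card_3_avoiding_triangle[of a b c A B C] abc ABC by blast
  have "\<not> \<Union>\<A> \<subseteq> {a, b, c, x}"
  proof
    assume "\<Union>\<A> \<subseteq> {a, b, c, x}"
    then have "card (\<Union>\<A>) \<le> card {a, b, c, x}" by (intro card_mono) auto
    also have "\<dots> \<le> 4" by (simp add: card_insert_if)
    finally show False using big by simp
  qed
  then obtain j E where E: "E \<in> \<A>" "j \<in> E" "j \<notin> {a, b, c, x}" by blast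
  have "E - {j} \<subseteq> X" if "X \<in> \<A>" "card X = 3" "j \<notin> X" for X
  proof (rule Diff_singleton_subset_if_card_Int)
    show "card E - 1 \<le> card (E \<inter> X)"
      using meet[OF E(1) that(1)] sizes[OF E(1)] that(2) by linarith
  qed (use E sizes that in auto)
  then have "E - {j} \<subseteq> T \<inter> A \<inter> B \<inter> C"
    using T ABC E(3) abc(1) x by blast
  also have "T \<inter> A \<inter> B \<inter> C = {}" using abc x by auto
  finally have "E \<subseteq> {j}" by blast
  then show False using sizes[OF E(1)] card_mono[of "{j}" E] by simp
qed

definition diff_coords :: "nat \<Rightarrow> (nat \<Rightarrow> bool) \<Rightarrow> (nat \<Rightarrow> bool) \<Rightarrow> nat set" where
  "diff_coords n v w = {i \<in> {1..n}. v i \<noteq> w i}"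

lemma hdist_eq_card_diff_coords: "hdist n v w = card (diff_coords n v w)"
  unfolding hdist_def diff_coords_def ..

lemma finite_diff_coords [simp]: "finite (diff_coords n v w)"
  by (simp add: diff_coords_def)

lemma diff_coords_commute: "diff_coords n v w = diff_coords n w v"
  unfolding diff_coords_def by auto

lemma diff_coords_eq_sym_diff:
  "diff_coords n x y = sym_diff (diff_coords n v x) (diff_coords n v y)"
  unfolding diff_coords_def by auto

lemma diff_coords_flip:
  "i \<in> {1..n} \<Longrightarrow> diff_coords n (flip v i) w = sym_diff {i} (diff_coords n v w)"
  unfolding diff_coords_def flip_def by auto

lemma flip_in_cube: "v \<in> cube n \<Longrightarrow> i \<in> {1..n} \<Longrightarrow> flip v i \<in> cube n"
  unfolding cube_def flip_def by auto

lemma eq_if_diff_coords_empty: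
  assumes "v \<in> cube n" "w \<in> cube n" "diff_coords n v w = {}"
  shows "w = v"
proof
  fix k show "w k = v k"
    using assms unfolding cube_def diff_coords_def by (cases "k \<in> {1..n}") auto
qed

lemma flip_if_diff_coords_singleton:
  assumes "v \<in> cube n" "w \<in> cube n" "diff_coords n v w = {i}"
  shows "w = flip v i"
proof
  have "i \<in> {1..n}" using assms(3) unfolding diff_coords_def by auto
  fix k show "w k = flip v i k"
    using assms \<open>i \<in> {1..n}\<close> unfolding cube_def diff_coords_def flip_def
    by (cases "k \<in> {1..n}"; cases "k = i") auto
qed

lemma card_diff_coords_ge_2:
  assumes "v \<in> cube n" "w \<in> cube n" "w \<noteq> v" "w \<notin> nbhd n v"
  shows "2 \<le> card (diff_coords n v w)"
proof (rule ccontr)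
  assume "\<not> ?thesis"
  then consider "diff_coords n v w = {}" | i where "diff_coords n v w = {i}"
    by (metis One_nat_def card_1_singletonE card_0_eq finite_diff_coords less_2_cases not_le)
  then show False
  proof cases
    case 1
    then show False using eq_if_diff_coords_empty assms by blast
  next
    case (2 i)
    then have "i \<in> {1..n}" unfolding diff_coords_def by auto
    then show False
      using flip_if_diff_coords_singleton[OF assms(1,2) 2] assms(4) unfolding nbhd_def by auto
  qed
qed

lemma is_simplex_insert:
  assumes "is_simplex n \<sigma>" "u \<in> cube n" "\<And>w. w \<in> \<sigma> \<Longrightarrow> hdist n u w \<le> 3"
  shows "is_simplex n (insert u \<sigma>)"
proof -
  have "hdist n w u \<le> 3" if "w \<in> \<sigma>" for w
    using assms(3)[OF that] by (simp add: hdist_eq_card_diff_coords diff_coords_commute)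
  moreover have "hdist n u u = 0" by (simp add: hdist_eq_card_diff_coords diff_coords_def)
  ultimately show ?thesis using assms unfolding is_simplex_def by auto
qed

lemma Union_diff_coords_eq_if_covers_all_places:
  assumes "covers_all_places n \<sigma>"
  shows "\<Union> (diff_coords n v ` (\<sigma> - {v})) = {1..n}"
proof
  show "\<Union> (diff_coords n v ` (\<sigma> - {v})) \<subseteq> {1..n}" unfolding diff_coords_def by auto
  show "{1..n} \<subseteq> \<Union> (diff_coords n v ` (\<sigma> - {v}))"
  proof
    fix j assume j: "j \<in> {1..n}"
    then obtain p q where "p \<in> \<sigma>" "q \<in> \<sigma>" "p j" "\<not> q j"
      using assms unfolding covers_all_places_def by blast
    then obtain w where "w \<in> \<sigma>" "v j \<noteq> w j" by metis
    then show "j \<in> \<Union> (diff_coords n v ` (\<sigma> - {v}))" using j unfolding diff_coords_def by auto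
  qed
qed

lemma common_coord_of_far_vertices:
  assumes "n \<ge> 5" "is_simplex n \<sigma>" "covers_all_places n \<sigma>" "v \<in> \<sigma>" "nbhd n v \<inter> \<sigma> = {}"
  shows "\<exists>i\<in>{1..n}. \<forall>w\<in>\<sigma>. hdist n v w = 3 \<longrightarrow> i \<in> diff_coords n v w"
proof -
  have cube: "\<sigma> \<subseteq> cube n" and close: "\<And>x y. x \<in> \<sigma> \<Longrightarrow> y \<in> \<sigma> \<Longrightarrow> hdist n x y \<le> 3"
    using assms(2) unfolding is_simplex_def by auto
  define \<A> where "\<A> = diff_coords n v ` (\<sigma> - {v})"
  have union: "\<Union>\<A> = {1..n}"
    unfolding \<A>_def using Union_diff_coords_eq_if_covers_all_places assms(3) .
  have "\<exists>i\<in>\<Union>\<A>. \<forall>A\<in>\<A>. card A = 3 \<longrightarrow> i \<in> A"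
  proof (rule common_point_of_close_sets)
    show "finite A \<and> 2 \<le> card A \<and> card A \<le> 3" if A: "A \<in> \<A>" for A
    proof -
      obtain w where w: "w \<in> \<sigma>" "w \<noteq> v" "A = diff_coords n v w"
        using A unfolding \<A>_def by blast
      then have "2 \<le> card A"
        using card_diff_coords_ge_2[of v n w] assms(4,5) cube by blast
      then show ?thesis using close[OF assms(4) w(1)] w(3) by (simp add: hdist_eq_card_diff_coords)
    qed
    show "card (sym_diff A B) \<le> 3" if "A \<in> \<A>" "B \<in> \<A>" for A B
      using that close unfolding \<A>_def
      by (auto simp: hdist_eq_card_diff_coords diff_coords_eq_sym_diff[symmetric])
    show "5 \<le> card (\<Union>\<A>)" using union assms(1) by simp
  qed
  then obtain i where i: "i \<in> {1..n}" and common: "\<forall>A\<in>\<A>. card A = 3 \<longrightarrow> i \<in> A"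
    unfolding union by blast
  have "i \<in> diff_coords n v w" if "w \<in> \<sigma>" "hdist n v w = 3" for w
  proof -
    have "w \<noteq> v" using that(2) by (auto simp: hdist_eq_card_diff_coords diff_coords_def)
    then show ?thesis using common that unfolding \<A>_def by (auto simp: hdist_eq_card_diff_coords)
  qed
  then show ?thesis using i by blast
qed

lemma hdist_flip_le_3:
  assumes "i \<in> {1..n}" "hdist n v w \<le> 3" "hdist n v w = 3 \<Longrightarrow> i \<in> diff_coords n v w"
  shows "hdist n (flip v i) w \<le> 3"
  using card_sym_diff_singleton_le_3[of "diff_coords n v w" i] assms
  by (simp add: hdist_eq_card_diff_coords diff_coords_flip)

theorem mainTheorem6:
  fixes n :: nat and \<sigma> :: "(nat \<Rightarrow> bool) set"
  assumes "n \<ge> 5"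
    and "maximal_simplex n \<sigma>"
    and "covers_all_places n \<sigma>"
  shows "\<forall>v\<in>\<sigma>. nbhd n v \<inter> \<sigma> \<noteq> {}"
proof (intro ballI notI)
  fix v assume v: "v \<in> \<sigma>" and lonely: "nbhd n v \<inter> \<sigma> = {}"
  have simplex: "is_simplex n \<sigma>"
    and maximal: "\<And>\<tau>. is_simplex n \<tau> \<Longrightarrow> \<sigma> \<subseteq> \<tau> \<Longrightarrow> \<tau> = \<sigma>"
    using assms(2) unfolding maximal_simplex_def by auto
  obtain i where i: "i \<in> {1..n}"
    and common: "\<And>w. w \<in> \<sigma> \<Longrightarrow> hdist n v w = 3 \<Longrightarrow> i \<in> diff_coords n v w"
    using common_coord_of_far_vertices[OF assms(1) simplex assms(3) v lonely] by blast
  have "hdist n (flip v i) w \<le> 3" if "w \<in> \<sigma>" for w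
    using hdist_flip_le_3[OF i] common[OF that] simplex v that unfolding is_simplex_def by blast
  moreover have "flip v i \<in> cube n" using flip_in_cube simplex v i unfolding is_simplex_def by blast
  ultimately have "is_simplex n (insert (flip v i) \<sigma>)" using is_simplex_insert simplex by blast
  then have "flip v i \<in> \<sigma>" using maximal by blast
  then show False using lonely i unfolding nbhd_def by blast
qed

end
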